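(* For each $\gamma$ obtained from a Frobenius array $\mu\in\mathcal{F}(\beta)$ as described (which is an $S_\beta$-partition), the array $\pi$ obtained by subtracting $\lfloor\frac{m+2-i}{2}\rfloor$ from each entry in the $i$-th row of $\gamma$ ($1\le i\le m+1$) is an $S_{\beta}$-partition.
   Context: Let $\beta=(b_1,\ldots,b_m)$ be a composition of $d$ and set $r_i=b_1+\cdots+b_i$ ($r_0=0$). The poset $S_\beta$ is $\bigcup_{l=1}^{m}\{(i,j): l\le i\le l+1,\ r_{l-1}+1\le j\le r_l\}$ with $(i_1,j_1)\le(i_2,j_2)$ iff $i_1\le i_2$ and $j_1\le j_2$; it has $m+1$ rows, and with its natural labeling an $S_\beta$-partition is an order-reversing map $S_\beta\to\mathbb{N}$ (nonnegative integers). A Frobenius symbol with $d$ columns is a two-rowed array $\left(\begin{smallmatrix}x_1&\cdots&x_d\\ y_1&\cdots&y_d\end{smallmatrix}\right)$ with $x_1>\cdots>x_d\ge0$, $y_1>\cdots>y_d\ge0$; a column is positive if $x_i-y_i\ge1$ and negative if $x_i-y_i\le0$; parity blocks are maximal sets of contiguous columns of the same parity. Subtracting $d-1,d-2,\ldots,0$ from the entries of columns $1,\ldots,d$ in each row gives a Frobenius array $\mu$ (rows weakly decreasing, parities unchanged). $\mathcal{F}(\beta)$ is the set of Frobenius arrays with $d$ columns and $m$ parity blocks $B_1,\ldots,B_m$, where the last block $B_m$ is positive and $B_i$ has $b_i$ columns. From $\mu\in\mathcal{F}(\beta)$, $\gamma$ is built by interchanging top and bottom entries in each negative block to get $\hat\mu$,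 then placing the $(i,j)$-th entry $\hat\mu_{i,j}$ at position $(i+l,j)$ of $S_\beta$, where $r_l<j\le r_{l+1}$. It is known that $\gamma$ is an $S_\beta$-partition whose columns are weakly decreasing, and strictly decreasing in columns coming from positive blocks of $\mu$. *)

theory Defs
  imports Main
begin

text \<open>A composition beta = (b_1,...,b_m) of d is a list of positive naturals;
  m = length beta, d = sum_list beta, r i = b_1 + ... + b_i.\<close>

definition composition :: "nat list \<Rightarrow> bool" where
  "composition beta \<longleftrightarrow> (\<forall>b\<in>set beta. 0 < b)"

definition psum :: "nat list \<Rightarrow> nat \<Rightarrow> nat" where
  "psum beta i = sum_list (take i beta)"

definition S_beta :: "nat list \<Rightarrow> (nat \<times> nat) set" where
  "S_beta beta = {(i, j). \<exists>l\<in>{1..length beta}. l \<le> i \<and> i \<le> l + 1 \<and>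
       psum beta (l - 1) + 1 \<le> j \<and> j \<le> psum beta l}"

definition pos_le :: "nat \<times> nat \<Rightarrow> nat \<times> nat \<Rightarrow> bool" where
  "pos_le p q \<longleftrightarrow> fst p \<le> fst q \<and> snd p \<le> snd q"

text \<open>An S-partition (natural labeling): an order-reversing map S \<rightarrow> N.
  Given as an integer-valued map, it must take nonnegative values on S.\<close>
definition is_S_partition :: "(nat \<times> nat) set \<Rightarrow> (nat \<times> nat \<Rightarrow> int) \<Rightarrow> bool" where
  "is_S_partition S f \<longleftrightarrow> (\<forall>p\<in>S. 0 \<le> f p) \<and>
      (\<forall>p\<in>S. \<forall>q\<in>S. pos_le p q \<longrightarrow> f q \<le> f p)"

definition frobenius_array :: "nat \<Rightarrow> (nat \<Rightarrow> nat) \<Rightarrow> (nat \<Rightarrow> nat) \<Rightarrow> bool" where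
  "frobenius_array d x y \<longleftrightarrow>
     (\<forall>j j'. 1 \<le> j \<and> j \<le> j' \<and> j' \<le> d \<longrightarrow> x j' \<le> x j \<and> y j' \<le> y j)"

definition pos_col :: "(nat \<Rightarrow> nat) \<Rightarrow> (nat \<Rightarrow> nat) \<Rightarrow> nat \<Rightarrow> bool" where
  "pos_col x y j \<longleftrightarrow> y j + 1 \<le> x j"

text \<open>Membership in F(beta): the parity blocks of the array are exactly the
  consecutive column intervals {r_{l-1}+1..r_l} (constant parity inside each,
  parity changing between consecutive ones, so they are maximal), and the last
  block B_m is positive.\<close>
definition in_F :: "nat list \<Rightarrow> (nat \<Rightarrow> nat) \<Rightarrow> (nat \<Rightarrow> nat) \<Rightarrow> bool" where
  "in_F beta x y \<longleftrightarrow>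
     frobenius_array (sum_list beta) x y \<and>
     (\<forall>l\<in>{1..length beta}. \<forall>j j'.
        psum beta (l - 1) < j \<and> j \<le> psum beta l \<and>
        psum beta (l - 1) < j' \<and> j' \<le> psum beta l \<longrightarrow>
        (pos_col x y j \<longleftrightarrow> pos_col x y j')) \<and>
     (\<forall>l. 1 \<le> l \<and> l < length beta \<longrightarrow>
        (pos_col x y (psum beta l) \<longleftrightarrow> \<not> pos_col x y (psum beta l + 1))) \<and>
     (\<forall>j. psum beta (length beta - 1) < j \<and> j \<le> sum_list beta \<longrightarrow> pos_col x y j)"

definition blk :: "nat list \<Rightarrow> nat \<Rightarrow> nat" where
  "blk beta j = (LEAST l. 1 \<le> l \<and> j \<le> psum beta l)"

definition hat_top :: "(nat \<Rightarrow> nat) \<Rightarrow> (nat \<Rightarrow> nat) \<Rightarrow> nat \<Rightarrow> nat" where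
  "hat_top x y j = (if pos_col x y j then x j else y j)"
definition hat_bot :: "(nat \<Rightarrow> nat) \<Rightarrow> (nat \<Rightarrow> nat) \<Rightarrow> nat \<Rightarrow> nat" where
  "hat_bot x y j = (if pos_col x y j then y j else x j)"

text \<open>gamma: hat mu_{1,j} placed at (L, j), hat mu_{2,j} at (L+1, j), where
  column j lies in block L (i.e. r_{L-1} < j \<le> r_L); value 0 outside S_beta.\<close>
definition gamma :: "nat list \<Rightarrow> (nat \<Rightarrow> nat) \<Rightarrow> (nat \<Rightarrow> nat) \<Rightarrow> nat \<times> nat \<Rightarrow> nat" where
  "gamma beta x y p = (let i = fst p; j = snd p; L = blk beta j in
     if i = L then hat_top x y j else if i = L + 1 then hat_bot x y j else 0)"

definition pi_arr :: "nat list \<Rightarrow> (nat \<Rightarrow> nat) \<Rightarrow> (nat \<Rightarrow> nat) \<Rightarrow> nat \<times> nat \<Rightarrow> int" where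
  "pi_arr beta x y p =
     int (gamma beta x y p) - int ((length beta + 2 - fst p) div 2)"

end

theory Submission
  imports Defs
begin

text \<open>Block B_l occupies rows l and l+1. Since the blocks alternate in sign and B_m is
  positive, B_l is positive exactly when m - l is even, which is exactly when the row shift
  floor((m+2-i)/2) drops by one from row l to row l+1. So down a column of a positive block the
  shift loses 1 while gamma drops strictly, and in a negative block the shift is constant while
  gamma is weakly decreasing. Along a row the shift is constant, and gamma is weakly decreasing
  because where two blocks of opposite signs meet, the bottom row of the first and the top row of
  the second both come from the same row of mu. Comparable cells of S_beta are
  joined by a monotone lattice path inside S_beta, so pi is order-reversing; it is nonnegative
  because every cell lies weakly above the minimal cell (m+1, d), where the shift is zero.\<close>

lemma psum_mono: "i \<le> k \<Longrightarrow> psum xs i \<le> psum xs k"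
  unfolding psum_def by (metis le_add_diff_inverse take_add sum_list_append le_add1)

lemma psum_length [simp]: "psum xs (length xs) = sum_list xs"
  by (simp add: psum_def)

lemma psum_Suc_strict:
  assumes "composition xs" "l < length xs"
  shows "psum xs l < psum xs (Suc l)"
proof -
  have "0 < xs ! l" using assms nth_mem unfolding composition_def by blast
  then show ?thesis using assms(2) by (simp add: psum_def take_Suc_conv_app_nth)
qed

lemma psum_last_strict:
  assumes "composition xs" "xs \<noteq> []"
  shows "psum xs (length xs - 1) < sum_list xs"
  using psum_Suc_strict[OF assms(1), of "length xs - 1"] assms(2) by simp

lemma blk_eq:
  assumes "1 \<le> l" "psum xs (l - 1) < j" "j \<le> psum xs l"
  shows "blk xs j = l"
  unfolding blk_def
proof (rule Least_equality)
  fix k assume k: "1 \<le> k \<and> j \<le> psum xs k"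
  show "l \<le> k"
  proof (rule ccontr)
    assume "\<not> l \<le> k"
    then have "psum xs k \<le> psum xs (l - 1)" by (intro psum_mono) simp
    then show False using k assms by simp
  qed
qed (use assms in simp)

lemma mem_S_beta_iff:
  "(i, j) \<in> S_beta xs \<longleftrightarrow> (\<exists>l. 1 \<le> l \<and> l \<le> length xs \<and> l \<le> i \<and> i \<le> l + 1 \<and>
     psum xs (l - 1) < j \<and> j \<le> psum xs l)"
  by (auto simp: S_beta_def)

lemma gamma_eq:
  assumes "1 \<le> l" "psum xs (l - 1) < j" "j \<le> psum xs l"
  shows "gamma xs x y (i, j) =
    (if i = l then hat_top x y j else if i = l + 1 then hat_bot x y j else 0)"
  using blk_eq[OF assms] by (simp add: gamma_def Let_def)

lemma in_F_antimono:
  "in_F xs x y \<Longrightarrow> 1 \<le> j \<Longrightarrow> j \<le> j' \<Longrightarrow> j' \<le> sum_list xs \<Longrightarrow> x j' \<le> x j \<and> y j' \<le> y j"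
  unfolding in_F_def frobenius_array_def by blast

lemma pos_col_block_const:
  assumes "in_F xs x y" "1 \<le> l" "l \<le> length xs"
    and "psum xs (l - 1) < j" "j \<le> psum xs l"
  shows "pos_col x y j \<longleftrightarrow> pos_col x y (psum xs l)"
proof -
  have "psum xs (l - 1) < psum xs l" using assms(4,5) by simp
  then show ?thesis using assms unfolding in_F_def by (meson atLeastAtMost_iff order_refl)
qed

lemma pos_col_block_end_iff_even:
  assumes comp: "composition xs" and F: "in_F xs x y" and "1 \<le> l" "l \<le> length xs"
  shows "pos_col x y (psum xs l) \<longleftrightarrow> even (length xs - l)"
  using assms(4,3)
proof (induction l rule: inc_induct)
  case base
  have "xs \<noteq> []" using base by auto
  then have "psum xs (length xs - 1) < sum_list xs" by (rule psum_last_strict[OF comp])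
  then show ?case using F unfolding in_F_def by simp
next
  case (step l)
  have "psum xs l < psum xs (Suc l)" using psum_Suc_strict[OF comp step.hyps(2)] .
  then have "pos_col x y (psum xs l + 1) \<longleftrightarrow> pos_col x y (psum xs (Suc l))"
    using pos_col_block_const[OF F, of "Suc l" "psum xs l + 1"] step.hyps by simp
  moreover have "pos_col x y (psum xs l) \<longleftrightarrow> \<not> pos_col x y (psum xs l + 1)"
    using F step unfolding in_F_def by simp
  ultimately show ?case using step by (simp add: Suc_diff_Suc)
qed

lemma pos_col_iff_even:
  assumes "composition xs" "in_F xs x y" "1 \<le> l" "l \<le> length xs"
    and "psum xs (l - 1) < j" "j \<le> psum xs l"
  shows "pos_col x y j \<longleftrightarrow> even (length xs - l)"
  using pos_col_block_const[OF assms(2-6)] pos_col_block_end_iff_even[OF assms(1-4)] by simp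

lemma gamma_row_antimono:
  assumes comp: "composition xs" and F: "in_F xs x y"
    and p: "(i, j) \<in> S_beta xs" and q: "(i, j') \<in> S_beta xs" and "j \<le> j'"
  shows "gamma xs x y (i, j') \<le> gamma xs x y (i, j)"
proof -
  obtain l where l: "1 \<le> l" "l \<le> length xs" "l \<le> i" "i \<le> l + 1"
      "psum xs (l - 1) < j" "j \<le> psum xs l"
    using p mem_S_beta_iff by blast
  obtain l' where l': "1 \<le> l'" "l' \<le> length xs" "l' \<le> i" "i \<le> l' + 1"
      "psum xs (l' - 1) < j'" "j' \<le> psum xs l'"
    using q mem_S_beta_iff by blast
  have "j' \<le> sum_list xs" using l' psum_mono[of l' "length xs" xs] by simp
  then have mono: "x j' \<le> x j \<and> y j' \<le> y j" using in_F_antimono[OF F] l \<open>j \<le> j'\<close> by simp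
  have "l \<le> l'"
  proof (rule ccontr)
    assume "\<not> l \<le> l'"
    then have "psum xs l' \<le> psum xs (l - 1)" by (intro psum_mono) simp
    then show False using l l' \<open>j \<le> j'\<close> by simp
  qed
  then consider "l' = l" | "l' = l + 1" "i = l + 1" using l l' by linarith
  then show ?thesis
  proof cases
    case 1
    then have "pos_col x y j \<longleftrightarrow> pos_col x y j'"
      using pos_col_iff_even[OF comp F] l l' by metis
    then show ?thesis using mono gamma_eq[OF l(1,5,6)] gamma_eq[OF l'(1,5,6)] l 1
      by (auto simp: hat_top_def hat_bot_def)
  next
    case 2
    then have "pos_col x y j \<longleftrightarrow> \<not> pos_col x y j'"
      using pos_col_iff_even[OF comp F l(1,2,5,6)] pos_col_iff_even[OF comp F l'(1,2,5,6)] l'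
      by auto
    then show ?thesis using mono gamma_eq[OF l(1,5,6)] gamma_eq[OF l'(1,5,6)] 2
      by (auto simp: hat_top_def hat_bot_def pos_col_def)
  qed
qed

lemma pi_arr_row_antimono:
  assumes "composition xs" "in_F xs x y"
    and "(i, j) \<in> S_beta xs" "(i, j') \<in> S_beta xs" "j \<le> j'"
  shows "pi_arr xs x y (i, j') \<le> pi_arr xs x y (i, j)"
  using gamma_row_antimono[OF assms] unfolding pi_arr_def by simp

lemma pi_arr_col_step:
  assumes comp: "composition xs" and F: "in_F xs x y"
    and p: "(i, j) \<in> S_beta xs" and q: "(Suc i, j) \<in> S_beta xs"
  shows "pi_arr xs x y (Suc i, j) \<le> pi_arr xs x y (i, j)"
proof -
  let ?m = "length xs"
  obtain l where l: "1 \<le> l" "l \<le> ?m" "l \<le> i" "i \<le> l + 1"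
      "psum xs (l - 1) < j" "j \<le> psum xs l"
    using p mem_S_beta_iff by blast
  obtain l' where l': "1 \<le> l'" "Suc i \<le> l' + 1" "psum xs (l' - 1) < j" "j \<le> psum xs l'"
    using q mem_S_beta_iff by blast
  have "i = l" using blk_eq[OF l(1,5,6)] blk_eq[OF l'(1,3,4)] l l' by simp
  then have gamma: "gamma xs x y (i, j) = hat_top x y j" "gamma xs x y (Suc i, j) = hat_bot x y j"
    using gamma_eq[OF l(1,5,6)] by simp_all
  have shift: "?m + 2 - i = Suc (Suc (?m - l))" "?m + 2 - Suc i = Suc (?m - l)"
    using \<open>i = l\<close> l by simp_all
  show ?thesis
  proof (cases "pos_col x y j")
    case True
    have "Suc (Suc k) div 2 \<le> Suc k div 2 + 1" for k :: nat by linarith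
    then show ?thesis using True gamma shift
      by (simp add: pi_arr_def hat_top_def hat_bot_def pos_col_def)
  next
    case False
    then have "odd (?m - l)" using pos_col_iff_even[OF comp F l(1,2,5,6)] by simp
    then have "Suc (Suc (?m - l)) div 2 = Suc (?m - l) div 2" by (auto elim: oddE)
    then show ?thesis using False gamma shift
      by (simp add: pi_arr_def hat_top_def hat_bot_def pos_col_def)
  qed
qed

lemma pi_arr_antimono:
  assumes comp: "composition xs" and F: "in_F xs x y"
    and "(i1, j1) \<in> S_beta xs" "(i2, j2) \<in> S_beta xs" "i1 \<le> i2" "j1 \<le> j2"
  shows "pi_arr xs x y (i2, j2) \<le> pi_arr xs x y (i1, j1)"
  using assms(3-6)
proof (induction "i2 - i1" arbitrary: i1 j1)
  case 0
  then show ?case using pi_arr_row_antimono[OF comp F] by simp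
next
  case (Suc n)
  let ?f = "pi_arr xs x y"
  show ?case
  proof (cases "(Suc i1, j1) \<in> S_beta xs")
    case True
    have "?f (i2, j2) \<le> ?f (Suc i1, j1)" using Suc True by simp
    also have "\<dots> \<le> ?f (i1, j1)" using pi_arr_col_step[OF comp F Suc.prems(1) True] .
    finally show ?thesis .
  next
    case False
    \<comment> \<open>(i1, j1) is a bottom cell of block l; move right to the first column of block l+1\<close>
    obtain l where l: "1 \<le> l" "l \<le> i1" "i1 \<le> l + 1" "psum xs (l - 1) < j1" "j1 \<le> psum xs l"
        "l \<le> length xs"
      using Suc.prems(1) mem_S_beta_iff by blast
    obtain l2 where l2: "l2 \<le> length xs" "i2 \<le> l2 + 1" "psum xs (l2 - 1) < j2"
      using Suc.prems(2) mem_S_beta_iff by blast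
    have "i1 = l + 1" using False l mem_S_beta_iff by fastforce
    then have "l < l2" "l < length xs" using Suc l2 by simp_all
    define j' where "j' = psum xs l + 1"
    have "psum xs l < psum xs (Suc l)" using psum_Suc_strict[OF comp \<open>l < length xs\<close>] .
    then have mid: "(i1, j') \<in> S_beta xs" "(Suc i1, j') \<in> S_beta xs"
      unfolding mem_S_beta_iff j'_def using \<open>i1 = l + 1\<close> \<open>l < length xs\<close>
      by (auto intro!: exI[of _ "Suc l"])
    have "psum xs l \<le> psum xs (l2 - 1)" using \<open>l < l2\<close> by (intro psum_mono) simp
    then have "j' \<le> j2" using l2 j'_def by simp
    then have "?f (i2, j2) \<le> ?f (Suc i1, j')" using Suc mid by simp
    also have "\<dots> \<le> ?f (i1, j')" using pi_arr_col_step[OF comp F mid] .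
    also have "\<dots> \<le> ?f (i1, j1)"
      using pi_arr_row_antimono[OF comp F Suc.prems(1) mid(1)] l j'_def by simp
    finally show ?thesis .
  qed
qed

lemma S_beta_least_cell:
  assumes comp: "composition xs" and p: "p \<in> S_beta xs"
  shows "(Suc (length xs), sum_list xs) \<in> S_beta xs \<and> pos_le p (Suc (length xs), sum_list xs)"
proof -
  obtain i j l where ij: "p = (i, j)" and l: "1 \<le> l" "l \<le> length xs" "i \<le> l + 1"
      "j \<le> psum xs l"
    using p mem_S_beta_iff by (metis prod.collapse)
  have "xs \<noteq> []" using l by auto
  then have "psum xs (length xs - 1) < sum_list xs" by (rule psum_last_strict[OF comp])
  then have "(Suc (length xs), sum_list xs) \<in> S_beta xs"
    unfolding mem_S_beta_iff using l by (auto intro!: exI[of _ "length xs"])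
  moreover have "pos_le p (Suc (length xs), sum_list xs)"
    using ij l psum_mono[of l "length xs" xs] by (simp add: pos_le_def)
  ultimately show ?thesis ..
qed

theorem lemma4p4:
  fixes beta :: "nat list" and x y :: "nat \<Rightarrow> nat"
  assumes "composition beta"
    and "in_F beta x y"
  shows "is_S_partition (S_beta beta) (pi_arr beta x y)"
proof -
  let ?f = "pi_arr beta x y" and ?corner = "(Suc (length beta), sum_list beta)"
  have antimono: "?f q \<le> ?f p" if "p \<in> S_beta beta" "q \<in> S_beta beta" "pos_le p q" for p q
    using pi_arr_antimono[OF assms] that unfolding pos_le_def by (metis prod.collapse)
  have "0 \<le> ?f p" if "p \<in> S_beta beta" for p
  proof -
    have "?f ?corner \<le> ?f p" using antimono S_beta_least_cell[OF assms(1)] that by blast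
    moreover have "0 \<le> ?f ?corner" by (simp add: pi_arr_def)
    ultimately show ?thesis by simp
  qed
  then show ?thesis unfolding is_S_partition_def using antimono by blast
qed

end
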